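(* Let $N\ge2$, $1\le q<2$, $\lambda_+,\lambda_->0$, $\mu>0$, and let $v\in H^1(B_1(x_0))$ be a weak solution of $-\Delta v=\mu\big(\lambda_+(v^+)^{q-1}-\lambda_-(v^-)^{q-1}\big)$ in $B_1(x_0)$. Suppose there exist $1\le\sigma<2/(2-q)$ and $\bar C>0$ such that $H(v,x_0,r)\le\bar C r^{N-1+2\sigma}$ for every $r\in(0,1)$. Then there exists $C=C(N,q,\lambda_+,\lambda_-)>0$ such that for every $\gamma\in[\sigma,\frac{2+\sigma q}{2})$ and every $r\in(0,1)$, $$\int_0^r\Phi_\gamma(v,x_0,s)\,ds\le\frac{C\mu\bar C^{q/2}}{2+\sigma q-2\gamma}\,r^{2+\sigma q-2\gamma};$$ in particular $\Phi_\gamma(v,x_0,\cdot)\in L^1(0,1)$.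
   Context: $v^\pm=\max\{\pm v,0\}$; for $q=1$, $(v^\pm)^0$ means $\chi_{\{\pm v>0\}}$. $F(v)=\mu\lambda_+(v^+)^q+\mu\lambda_-(v^-)^q$, $H(v,x_0,r)=\int_{S_r(x_0)}v^2\,d\sigma$, and $\Phi_\gamma(v,x_0,r)=\frac{2N-(N-2)q}{q\,r^{N-1+2\gamma}}\int_{B_r(x_0)}F(v)\,dx$. *)

theory Defs
  imports "HOL-Analysis.Analysis"
begin

text \<open>The powers (v^+)^(q-1) etc. are written with powr;
  note 0 powr a = 0 and t powr 0 = 1 for t > 0, so for q = 1 the term (v^+) powr 0 is
  exactly the characteristic function of {v > 0}, as in the paper's convention.\<close>

definition pos_part :: "real \<Rightarrow> real" where "pos_part t = max t 0"
definition neg_part :: "real \<Rightarrow> real" where "neg_part t = max (- t) 0"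

definition rhs :: "real \<Rightarrow> real \<Rightarrow> real \<Rightarrow> real \<Rightarrow> real \<Rightarrow> real" where
  "rhs \<mu> lp lm q t = \<mu> * (lp * pos_part t powr (q - 1) - lm * neg_part t powr (q - 1))"

definition Fpot :: "real \<Rightarrow> real \<Rightarrow> real \<Rightarrow> real \<Rightarrow> real \<Rightarrow> real" where
  "Fpot \<mu> lp lm q t = \<mu> * lp * pos_part t powr q + \<mu> * lm * neg_part t powr q"

definition test_fun :: "'a::euclidean_space set \<Rightarrow> ('a \<Rightarrow> real) \<Rightarrow> ('a \<Rightarrow> 'a) \<Rightarrow> bool" where
  "test_fun U \<phi> d\<phi> \<longleftrightarrow>
     (\<forall>x. (\<phi> has_derivative (\<lambda>h. d\<phi> x \<bullet> h)) (at x)) \<and> continuous_on UNIV d\<phi> \<and>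
     compact (closure {x. \<phi> x \<noteq> 0}) \<and> closure {x. \<phi> x \<noteq> 0} \<subseteq> U"

definition weak_gradient :: "'a::euclidean_space set \<Rightarrow> ('a \<Rightarrow> real) \<Rightarrow> ('a \<Rightarrow> 'a) \<Rightarrow> bool" where
  "weak_gradient U v g \<longleftrightarrow>
     (\<forall>\<phi> d\<phi>. test_fun U \<phi> d\<phi> \<longrightarrow>
        (\<forall>i\<in>Basis. (LINT x:U|lborel. v x * (d\<phi> x \<bullet> i)) = - (LINT x:U|lborel. (g x \<bullet> i) * \<phi> x)))"

definition H1_with_grad :: "'a::euclidean_space set \<Rightarrow> ('a \<Rightarrow> real) \<Rightarrow> ('a \<Rightarrow> 'a) \<Rightarrow> bool" where
  "H1_with_grad U v g \<longleftrightarrow>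
     set_borel_measurable lborel U v \<and> set_integrable lborel U (\<lambda>x. (v x)\<^sup>2) \<and>
     set_borel_measurable lborel U g \<and> set_integrable lborel U (\<lambda>x. (norm (g x))\<^sup>2) \<and>
     weak_gradient U v g"

definition weak_solution :: "'a::euclidean_space set \<Rightarrow> (real \<Rightarrow> real) \<Rightarrow> ('a \<Rightarrow> real) \<Rightarrow> bool" where
  "weak_solution U f v \<longleftrightarrow>
     (\<exists>g. H1_with_grad U v g \<and>
        (\<forall>\<phi> d\<phi>. test_fun U \<phi> d\<phi> \<longrightarrow>
           (LINT x:U|lborel. g x \<bullet> d\<phi> x) = (LINT x:U|lborel. f (v x) * \<phi> x)))"

text \<open>Surface integral over the sphere S_r(x0), via the cone-measure formula for the
  surface measure: \<integral>_{S_r(x0)} w d\<sigma> = N r^(N-1) \<integral>_{B_1(0)} w(x0 + r y/|y|) dy.\<close>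
definition sphere_integral :: "('a::euclidean_space \<Rightarrow> real) \<Rightarrow> 'a \<Rightarrow> real \<Rightarrow> real" where
  "sphere_integral w x0 r =
     real DIM('a) * r ^ (DIM('a) - 1) *
       (LINT y:ball 0 1|lborel. w (x0 + (r / norm y) *\<^sub>R y))"

definition Hfun :: "('a::euclidean_space \<Rightarrow> real) \<Rightarrow> 'a \<Rightarrow> real \<Rightarrow> real" where
  "Hfun v x0 r = sphere_integral (\<lambda>x. (v x)\<^sup>2) x0 r"

definition Phi :: "real \<Rightarrow> real \<Rightarrow> real \<Rightarrow> real \<Rightarrow> real \<Rightarrow> ('a::euclidean_space \<Rightarrow> real) \<Rightarrow> 'a \<Rightarrow> real \<Rightarrow> real" where
  "Phi \<mu> lp lm q \<gamma> v x0 r =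
     (2 * real DIM('a) - (real DIM('a) - 2) * q) / (q * r powr (real DIM('a) - 1 + 2 * \<gamma>)) *
       (LINT x:ball x0 r|lborel. Fpot \<mu> lp lm q (v x))"

end

(* Only the growth of H enters, not the equation.  Since F(v) <= mu (lambda_+ + lambda_-) |v|^q, it
   suffices to integrate |v|^q over balls.  On the sphere S_t, Young's inequality
   A^(2-q) |v|^q <= (q/2) v^2 + (1 - q/2) A^2 with A^2 = Cbar t^(2 sigma) turns the bound on
   H(v,x0,t) into the bound C Cbar^(q/2) t^(N-1+sigma q) for the integral of |v|^q over S_t.
   Integrating in polar coordinates over t in (0,s) gives that the integral of F(v) over B_s(x0) is
   at most C mu Cbar^(q/2) s^(N+sigma q), hence Phi_gamma(s) <= C mu Cbar^(q/2) s^(1+sigma q-2 gamma),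
   and this power is integrable at 0 precisely because gamma < (2 + sigma q)/2. *)

theory Submission
  imports Defs
begin

section \<open>Polar coordinates\<close>

lemma nn_integral_lborel_scaleR:
  fixes f :: "'a::euclidean_space \<Rightarrow> ennreal" and c :: real
  assumes [measurable]: "f \<in> borel_measurable borel" and c: "c \<noteq> 0"
  shows "(\<integral>\<^sup>+x. f x \<partial>lborel) = ennreal (\<bar>c\<bar> ^ DIM('a)) * (\<integral>\<^sup>+x. f (c *\<^sub>R x) \<partial>lborel)"
  by (subst lborel_affine[OF c, of 0])
     (simp add: nn_integral_density nn_integral_distr nn_integral_cmult)

lemma nn_integral_power_tail:
  fixes a :: real and n :: nat
  assumes a: "a > 0" and n: "n \<ge> 1"
  shows "(\<integral>\<^sup>+l\<in>{a<..}. ennreal (real n / l ^ (n + 1)) \<partial>lborel) = ennreal (1 / a ^ n)"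
proof -
  have "(\<integral>\<^sup>+l\<in>{a<..}. ennreal (real n / l ^ (n + 1)) \<partial>lborel)
      = (\<integral>\<^sup>+l. ennreal (indicator {a..} l * (real n * (1 / l ^ (n + 1)))) \<partial>lborel)"
    using AE_lborel_singleton[of a]
    by (intro nn_integral_cong_AE) (auto elim!: eventually_mono split: split_indicator)
  also have "\<dots> = ennreal (real n * (1 / (real (n + 1 - 1) * a ^ (n + 1 - 1))))"
    using a n
    by (intro nn_integral_has_integral_lebesgue has_integral_mult_right
        has_integral_inverse_power_to_inf) auto
  finally show ?thesis
    using n by simp
qed

lemma nn_integral_radial_rescale:
  fixes g :: "real \<Rightarrow> ennreal" and n :: nat
  assumes [measurable]: "g \<in> borel_measurable borel" and a: "a > 0" and n: "n \<ge> 1"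
  shows "(\<integral>\<^sup>+t\<in>{0<..}. ennreal (real n * t ^ (n - 1)) * g (t / a) \<partial>lborel)
       = ennreal (a ^ n) * (\<integral>\<^sup>+l\<in>{0<..}. ennreal (real n * l ^ (n - 1)) * g l \<partial>lborel)"
proof -
  have pt: "ennreal (real n * (a * l) ^ (n - 1)) * g (a * l / a) * indicator {0<..} (a * l)
      = ennreal (a ^ (n - 1)) * (ennreal (real n * l ^ (n - 1)) * g l * indicator {0<..} l)" for l
    using a by (auto simp: power_mult_distrib ennreal_mult' zero_less_mult_iff mult_ac
        split: split_indicator)
  have "(\<integral>\<^sup>+t\<in>{0<..}. ennreal (real n * t ^ (n - 1)) * g (t / a) \<partial>lborel)
      = ennreal a * (\<integral>\<^sup>+l. ennreal (real n * (a * l) ^ (n - 1)) * g (a * l / a) *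
          indicator {0<..} (a * l) \<partial>lborel)"
    using a by (subst nn_integral_real_affine[where c = a and t = 0]) simp_all
  also have "\<dots> = ennreal a * (\<integral>\<^sup>+l. ennreal (a ^ (n - 1)) *
          (ennreal (real n * l ^ (n - 1)) * g l * indicator {0<..} l) \<partial>lborel)"
    by (simp only: pt)
  also have "\<dots> = ennreal (a * a ^ (n - 1)) *
      (\<integral>\<^sup>+l\<in>{0<..}. ennreal (real n * l ^ (n - 1)) * g l \<partial>lborel)"
    using a by (simp add: nn_integral_cmult ennreal_mult mult.assoc)
  also have "a * a ^ (n - 1) = a ^ n"
    using n by (cases n) simp_all
  finally show ?thesis .
qed

lemma nn_integral_ball_rescale:
  fixes f :: "'a::euclidean_space \<Rightarrow> ennreal"
  assumes [measurable]: "f \<in> borel_measurable borel" and l: "l > 0"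
  shows "(\<integral>\<^sup>+z\<in>ball 0 l. ennreal (norm z ^ DIM('a)) * f z \<partial>lborel)
       = ennreal (l ^ (2 * DIM('a))) *
           (\<integral>\<^sup>+y\<in>ball 0 1. ennreal (norm y ^ DIM('a)) * f (l *\<^sub>R y) \<partial>lborel)"
proof -
  have [measurable]: "ball (0::'a) 1 \<in> sets borel"
    by simp
  have pt: "ennreal (norm (l *\<^sub>R y) ^ DIM('a)) * f (l *\<^sub>R y) * indicator (ball 0 l) (l *\<^sub>R y)
      = ennreal (l ^ DIM('a)) * (ennreal (norm y ^ DIM('a)) * f (l *\<^sub>R y) * indicator (ball 0 1) y)"
    for y :: 'a
    using l by (auto simp: power_mult_distrib ennreal_mult' mult_ac split: split_indicator)
  have "(\<integral>\<^sup>+z\<in>ball 0 l. ennreal (norm z ^ DIM('a)) * f z \<partial>lborel)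
      = ennreal (l ^ DIM('a)) * (\<integral>\<^sup>+y. ennreal (norm (l *\<^sub>R y) ^ DIM('a)) * f (l *\<^sub>R y) *
          indicator (ball 0 l) (l *\<^sub>R y) \<partial>lborel)"
    using l by (subst nn_integral_lborel_scaleR[where c = l]) (measurable, simp_all)
  also have "\<dots> = ennreal (l ^ DIM('a)) * (\<integral>\<^sup>+y. ennreal (l ^ DIM('a)) *
          (ennreal (norm y ^ DIM('a)) * f (l *\<^sub>R y) * indicator (ball 0 1) y) \<partial>lborel)"
    by (simp only: pt)
  also have "\<dots> = ennreal (l ^ DIM('a)) * ennreal (l ^ DIM('a)) *
      (\<integral>\<^sup>+y\<in>ball 0 1. ennreal (norm y ^ DIM('a)) * f (l *\<^sub>R y) \<partial>lborel)"
    by (simp add: nn_integral_cmult mult.assoc)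
  also have "ennreal (l ^ DIM('a)) * ennreal (l ^ DIM('a)) = ennreal (l ^ (2 * DIM('a)))"
    using l by (simp add: ennreal_mult'[symmetric] power_even_eq power2_eq_square)
  finally show ?thesis .
qed

lemma nn_integral_lborel_shells:
  fixes f :: "'a::euclidean_space \<Rightarrow> ennreal"
  assumes [measurable]: "f \<in> borel_measurable borel"
  shows "(\<integral>\<^sup>+z. f z \<partial>lborel) =
    (\<integral>\<^sup>+l\<in>{0<..}. ennreal (real DIM('a) / l ^ (DIM('a) + 1)) *
       (\<integral>\<^sup>+z\<in>ball 0 l. ennreal (norm z ^ DIM('a)) * f z \<partial>lborel) \<partial>lborel)"
proof -
  \<comment> \<open>Insert 1 = |z|^n * (integral of n / l^(n+1) over l > |z|) and swap the integrals.\<close>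
  define n where "n = DIM('a)"
  have n: "n \<ge> 1"
    by (simp add: n_def DIM_positive Suc_leI)
  have [measurable]: "ball (0::'a) r \<in> sets borel" for r
    by simp
  define G where "G l z = ennreal (real n / l ^ (n + 1)) * indicator {norm z<..} l *
    (ennreal (norm z ^ n) * f z)" for l :: real and z :: 'a
  have [measurable]: "Measurable.pred (borel \<Otimes>\<^sub>M borel) (\<lambda>x::real \<times> 'a. fst x \<in> {norm (snd x)<..})"
    unfolding greaterThan_iff by measurable
  have [measurable]: "(\<lambda>(l, z). G l z) \<in> borel_measurable (lborel \<Otimes>\<^sub>M lborel)"
    unfolding G_def by measurable
  have "(\<integral>\<^sup>+z. f z \<partial>lborel) = (\<integral>\<^sup>+z. \<integral>\<^sup>+l. G l z \<partial>lborel \<partial>lborel)"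
  proof (rule nn_integral_cong_AE, rule eventually_mono[OF AE_lborel_singleton[of 0]])
    fix z :: 'a
    assume "z \<noteq> 0"
    have "(\<integral>\<^sup>+l. G l z \<partial>lborel)
        = (\<integral>\<^sup>+l\<in>{norm z<..}. ennreal (real n / l ^ (n + 1)) \<partial>lborel) * (ennreal (norm z ^ n) * f z)"
      unfolding G_def by (rule nn_integral_multc) measurable
    also have "\<dots> = ennreal (1 / norm z ^ n) * (ennreal (norm z ^ n) * f z)"
      using \<open>z \<noteq> 0\<close> n by (subst nn_integral_power_tail) auto
    also have "\<dots> = f z"
      using \<open>z \<noteq> 0\<close> by (simp flip: mult.assoc ennreal_mult')
    finally show "f z = (\<integral>\<^sup>+l. G l z \<partial>lborel)" ..
  qed
  also have "\<dots> = (\<integral>\<^sup>+l. \<integral>\<^sup>+z. G l z \<partial>lborel \<partial>lborel)"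
    by (rule lborel_pair.Fubini'[symmetric]) measurable
  also have "\<dots> = (\<integral>\<^sup>+l\<in>{0<..}. ennreal (real n / l ^ (n + 1)) *
       (\<integral>\<^sup>+z\<in>ball 0 l. ennreal (norm z ^ n) * f z \<partial>lborel) \<partial>lborel)"
  proof (intro nn_integral_cong)
    fix l :: real
    have pt: "G l z = ennreal (real n / l ^ (n + 1)) * indicator {0<..} l *
        (ennreal (norm z ^ n) * f z * indicator (ball 0 l) z)" for z
      by (auto simp: G_def split: split_indicator dest: le_less_trans[OF norm_ge_zero])
    have "(\<integral>\<^sup>+z. G l z \<partial>lborel) = ennreal (real n / l ^ (n + 1)) * indicator {0<..} l *
        (\<integral>\<^sup>+z\<in>ball 0 l. ennreal (norm z ^ n) * f z \<partial>lborel)"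
      unfolding pt by (rule nn_integral_cmult) measurable
    then show "(\<integral>\<^sup>+z. G l z \<partial>lborel) = ennreal (real n / l ^ (n + 1)) *
        (\<integral>\<^sup>+z\<in>ball 0 l. ennreal (norm z ^ n) * f z \<partial>lborel) * indicator {0<..} l"
      by (simp only: mult_ac)
  qed
  finally show ?thesis
    unfolding n_def .
qed

lemma nn_integral_lborel_rays:
  fixes f :: "'a::euclidean_space \<Rightarrow> ennreal"
  assumes [measurable]: "f \<in> borel_measurable borel"
  shows "(\<integral>\<^sup>+z. f z \<partial>lborel) =
    (\<integral>\<^sup>+l\<in>{0<..}. ennreal (real DIM('a) * l ^ (DIM('a) - 1)) *
       (\<integral>\<^sup>+y\<in>ball 0 1. ennreal (norm y ^ DIM('a)) * f (l *\<^sub>R y) \<partial>lborel) \<partial>lborel)"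
proof (subst nn_integral_lborel_shells[OF assms], intro nn_integral_cong)
  fix l :: real
  define n where "n = DIM('a)"
  show "ennreal (real DIM('a) / l ^ (DIM('a) + 1)) *
      (\<integral>\<^sup>+z\<in>ball 0 l. ennreal (norm z ^ DIM('a)) * f z \<partial>lborel) * indicator {0<..} l
    = ennreal (real DIM('a) * l ^ (DIM('a) - 1)) *
      (\<integral>\<^sup>+y\<in>ball 0 1. ennreal (norm y ^ DIM('a)) * f (l *\<^sub>R y) \<partial>lborel) * indicator {0<..} l"
  proof (cases "l > 0")
    case True
    have "2 * n = (n + 1) + (n - 1)"
      using DIM_positive[where 'a = 'a] unfolding n_def by linarith
    then have "l ^ (2 * n) = l ^ (n + 1) * l ^ (n - 1)"
      by (simp only: power_add)
    then have "ennreal (real n / l ^ (n + 1)) * ennreal (l ^ (2 * n)) = ennreal (real n * l ^ (n - 1))"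
      using True by (subst ennreal_mult[symmetric]) simp_all
    then show ?thesis
      using nn_integral_ball_rescale[OF assms True] by (simp add: n_def mult.assoc[symmetric])
  qed simp
qed

lemma nn_integral_lborel_polar:
  fixes f :: "'a::euclidean_space \<Rightarrow> ennreal"
  assumes [measurable]: "f \<in> borel_measurable borel"
  shows "(\<integral>\<^sup>+z. f z \<partial>lborel) =
    (\<integral>\<^sup>+t\<in>{0<..}. ennreal (real DIM('a) * t ^ (DIM('a) - 1)) *
       (\<integral>\<^sup>+y\<in>ball 0 1. f ((t / norm y) *\<^sub>R y) \<partial>lborel) \<partial>lborel)"
proof -
  define n where "n = DIM('a)"
  have n: "n \<ge> 1"
    by (simp add: n_def DIM_positive Suc_leI)
  define \<rho> where "\<rho> t = ennreal (real n * t ^ (n - 1))" for t :: real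
  have [measurable]: "\<rho> \<in> borel_measurable borel" "ball (0::'a) 1 \<in> sets borel"
    unfolding \<rho>_def by measurable
  define H where "H l y = \<rho> l * indicator {0<..} l *
    (ennreal (norm y ^ n) * f (l *\<^sub>R y) * indicator (ball 0 1) y)" for l :: real and y :: 'a
  define K where "K t y = \<rho> t * indicator {0<..} t * (f ((t / norm y) *\<^sub>R y) * indicator (ball 0 1) y)"
    for t :: real and y :: 'a
  have [measurable]: "(\<lambda>(l, y). H l y) \<in> borel_measurable (lborel \<Otimes>\<^sub>M lborel)"
    "(\<lambda>(t, y). K t y) \<in> borel_measurable (lborel \<Otimes>\<^sub>M lborel)"
    unfolding H_def K_def by measurable
  have "(\<integral>\<^sup>+z. f z \<partial>lborel) =
      (\<integral>\<^sup>+l\<in>{0<..}. \<rho> l * (\<integral>\<^sup>+y\<in>ball 0 1. ennreal (norm y ^ n) * f (l *\<^sub>R y) \<partial>lborel) \<partial>lborel)"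
    unfolding \<rho>_def n_def by (rule nn_integral_lborel_rays[OF assms])
  also have "\<dots> = (\<integral>\<^sup>+l. \<integral>\<^sup>+y. H l y \<partial>lborel \<partial>lborel)"
    unfolding H_def by (intro nn_integral_cong) (simp add: nn_integral_cmult mult_ac)
  also have "\<dots> = (\<integral>\<^sup>+y. \<integral>\<^sup>+l. H l y \<partial>lborel \<partial>lborel)"
    by (rule lborel_pair.Fubini') measurable
  also have "\<dots> = (\<integral>\<^sup>+y. \<integral>\<^sup>+t. K t y \<partial>lborel \<partial>lborel)"
  proof (rule nn_integral_cong_AE, rule eventually_mono[OF AE_lborel_singleton[of 0]])
    fix y :: 'a
    assume "y \<noteq> 0"
    have H_eq: "H l y = \<rho> l * f (l *\<^sub>R y) * indicator {0<..} l * (ennreal (norm y ^ n) * indicator (ball 0 1) y)"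
      for l
      by (simp add: H_def mult_ac)
    have K_eq: "K t y = \<rho> t * f ((t / norm y) *\<^sub>R y) * indicator {0<..} t * indicator (ball 0 1) y" for t
      by (simp add: K_def mult_ac)
    have "(\<integral>\<^sup>+l. H l y \<partial>lborel) =
        (\<integral>\<^sup>+l\<in>{0<..}. \<rho> l * f (l *\<^sub>R y) \<partial>lborel) * (ennreal (norm y ^ n) * indicator (ball 0 1) y)"
      unfolding H_eq by (rule nn_integral_multc) measurable
    also have "\<dots> = (\<integral>\<^sup>+t\<in>{0<..}. \<rho> t * f ((t / norm y) *\<^sub>R y) \<partial>lborel) * indicator (ball 0 1) y"
      using nn_integral_radial_rescale[where g = "\<lambda>l. f (l *\<^sub>R y)" and a = "norm y", OF _ _ n]
        \<open>y \<noteq> 0\<close> by (simp add: \<rho>_def mult_ac)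
    also have "\<dots> = (\<integral>\<^sup>+t. K t y \<partial>lborel)"
      unfolding K_eq by (rule nn_integral_multc[symmetric]) measurable
    finally show "(\<integral>\<^sup>+l. H l y \<partial>lborel) = (\<integral>\<^sup>+t. K t y \<partial>lborel)" .
  qed
  also have "\<dots> = (\<integral>\<^sup>+t. \<integral>\<^sup>+y. K t y \<partial>lborel \<partial>lborel)"
    by (rule lborel_pair.Fubini'[symmetric]) measurable
  also have "\<dots> = (\<integral>\<^sup>+t\<in>{0<..}. \<rho> t * (\<integral>\<^sup>+y\<in>ball 0 1. f ((t / norm y) *\<^sub>R y) \<partial>lborel) \<partial>lborel)"
    unfolding K_def by (intro nn_integral_cong) (simp add: nn_integral_cmult mult_ac)
  finally show ?thesis
    unfolding \<rho>_def n_def .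
qed

section \<open>Integrals over spheres and balls\<close>

lemma set_nn_integral_eq_set_integral:
  fixes f :: "'a \<Rightarrow> real"
  assumes "set_integrable M A f" and "\<And>x. x \<in> A \<Longrightarrow> 0 \<le> f x"
  shows "(\<integral>\<^sup>+x\<in>A. ennreal (f x) \<partial>M) = ennreal (LINT x:A|M. f x)"
proof -
  have "(\<integral>\<^sup>+x\<in>A. ennreal (f x) \<partial>M) = (\<integral>\<^sup>+x. ennreal (indicator A x *\<^sub>R f x) \<partial>M)"
    by (intro nn_integral_cong) (simp split: split_indicator)
  also have "\<dots> = ennreal (LINT x:A|M. f x)"
    using assms unfolding set_integrable_def set_lebesgue_integral_def
    by (intro nn_integral_eq_integral) (auto split: split_indicator)
  finally show ?thesis .
qed

lemma set_integrable_sphere_pullback: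
  fixes w :: "'a::euclidean_space \<Rightarrow> real"
  assumes w: "continuous_on (cball c t) w" and t: "0 \<le> t"
  shows "set_integrable lborel (ball 0 1) (\<lambda>y. w (c + (t / norm y) *\<^sub>R y))"
proof -
  define w' where "w' x = indicator (cball c t) x *\<^sub>R w x" for x
  have [measurable]: "w' \<in> borel_measurable borel"
    unfolding w'_def using w by (intro borel_measurable_continuous_on_indicator) auto
  have [measurable]: "ball (0::'a) 1 \<in> sets borel"
    by simp
  have on_sphere: "c + (t / norm y) *\<^sub>R y \<in> cball c t" for y :: 'a
    using t by (cases "y = 0") (auto simp: dist_norm)
  have "bounded (w ` cball c t)"
    by (intro compact_imp_bounded compact_continuous_image w compact_cball)
  then obtain B where B: "\<And>x. x \<in> cball c t \<Longrightarrow> norm (w x) \<le> B"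
    by (meson bounded_iff imageI)
  have "set_integrable lborel (ball 0 1) (\<lambda>y. w' (c + (t / norm y) *\<^sub>R y))"
    unfolding set_integrable_def
  proof (rule integrableI_bounded_set[where A = "ball 0 1" and B = B])
    show "emeasure lborel (ball (0::'a) 1) < \<infinity>"
      by (rule emeasure_bounded_finite) simp
    show "AE y in lborel. y \<in> ball 0 1 \<longrightarrow>
        norm (indicator (ball 0 1) y *\<^sub>R w' (c + (t / norm y) *\<^sub>R y)) \<le> B"
      using B on_sphere by (simp add: w'_def)
  qed measurable
  then show ?thesis
    using on_sphere by (simp add: w'_def)
qed

lemma ennreal_sphere_integral:
  fixes w :: "'a::euclidean_space \<Rightarrow> real"
  assumes w: "continuous_on (cball c t) w" and t: "0 \<le> t" and nonneg: "\<And>x. x \<in> cball c t \<Longrightarrow> 0 \<le> w x"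
  shows "ennreal (sphere_integral w c t) = ennreal (real DIM('a) * t ^ (DIM('a) - 1)) *
    (\<integral>\<^sup>+y\<in>ball 0 1. ennreal (w (c + (t / norm y) *\<^sub>R y)) \<partial>lborel)"
proof -
  have "c + (t / norm y) *\<^sub>R y \<in> cball c t" for y :: 'a
    using t by (cases "y = 0") (auto simp: dist_norm)
  then have "(\<integral>\<^sup>+y\<in>ball 0 1. ennreal (w (c + (t / norm y) *\<^sub>R y)) \<partial>lborel)
      = ennreal (LINT y:ball 0 1|lborel. w (c + (t / norm y) *\<^sub>R y))"
    using nonneg by (intro set_nn_integral_eq_set_integral set_integrable_sphere_pullback[OF w t]) auto
  then show ?thesis
    using t by (simp add: sphere_integral_def ennreal_mult'[symmetric] mult.assoc)
qed

lemma nn_integral_ball_eq_sphere_integral: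
  fixes w :: "'a::euclidean_space \<Rightarrow> real"
  assumes w: "continuous_on (cball c s) w" and nonneg: "\<And>x. x \<in> cball c s \<Longrightarrow> 0 \<le> w x"
  shows "(\<integral>\<^sup>+x\<in>ball c s. ennreal (w x) \<partial>lborel) =
    (\<integral>\<^sup>+t\<in>{0<..<s}. ennreal (sphere_integral w c t) \<partial>lborel)"
proof -
  define w' where "w' x = indicator (cball c s) x *\<^sub>R w x" for x
  have [measurable]: "w' \<in> borel_measurable borel"
    unfolding w'_def using w by (intro borel_measurable_continuous_on_indicator) auto
  have [measurable]: "ball c s \<in> sets borel" "ball (0::'a) 1 \<in> sets borel"
    by simp_all
  define f where "f z = ennreal (w' (c + z)) * indicator (ball c s) (c + z)" for z
  have [measurable]: "f \<in> borel_measurable borel"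
    unfolding f_def by measurable
  have "(\<integral>\<^sup>+x\<in>ball c s. ennreal (w x) \<partial>lborel) = (\<integral>\<^sup>+x. ennreal (w' x) * indicator (ball c s) x \<partial>lborel)"
    by (intro nn_integral_cong) (simp add: w'_def split: split_indicator)
  also have "\<dots> = (\<integral>\<^sup>+z. f z \<partial>lborel)"
    unfolding f_def by (subst lborel_distr_plus[symmetric, of c]) (simp add: nn_integral_distr)
  also have "\<dots> = (\<integral>\<^sup>+t\<in>{0<..}. ennreal (real DIM('a) * t ^ (DIM('a) - 1)) *
       (\<integral>\<^sup>+y\<in>ball 0 1. f ((t / norm y) *\<^sub>R y) \<partial>lborel) \<partial>lborel)"
    by (rule nn_integral_lborel_polar) measurable
  also have "\<dots> = (\<integral>\<^sup>+t\<in>{0<..<s}. ennreal (sphere_integral w c t) \<partial>lborel)"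
  proof (rule nn_integral_cong)
    fix t :: real
    consider "t \<le> 0" | "0 < t" "t < s" | "0 < t" "s \<le> t"
      by linarith
    then show "ennreal (real DIM('a) * t ^ (DIM('a) - 1)) *
        (\<integral>\<^sup>+y\<in>ball 0 1. f ((t / norm y) *\<^sub>R y) \<partial>lborel) * indicator {0<..} t =
      ennreal (sphere_integral w c t) * indicator {0<..<s} t"
    proof cases
      case 1
      then show ?thesis
        by simp
    next
      case 2
      have inside: "c + (t / norm y) *\<^sub>R y \<in> ball c s" "c + (t / norm y) *\<^sub>R y \<in> cball c s"
        for y :: 'a
        using 2 by (cases "y = 0", auto simp: dist_norm)+
      then have "(\<integral>\<^sup>+y\<in>ball 0 1. f ((t / norm y) *\<^sub>R y) \<partial>lborel)
          = (\<integral>\<^sup>+y\<in>ball 0 1. ennreal (w (c + (t / norm y) *\<^sub>R y)) \<partial>lborel)"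
        unfolding f_def w'_def by (intro nn_integral_cong) (simp add: indicator_simps(1))
      moreover have "ennreal (sphere_integral w c t) = ennreal (real DIM('a) * t ^ (DIM('a) - 1)) *
          (\<integral>\<^sup>+y\<in>ball 0 1. ennreal (w (c + (t / norm y) *\<^sub>R y)) \<partial>lborel)"
        using 2 nonneg by (intro ennreal_sphere_integral continuous_on_subset[OF w]) auto
      ultimately show ?thesis
        using 2 by simp
    next
      case 3
      have null: "AE y in lborel. f ((t / norm y) *\<^sub>R y) * indicator (ball 0 1) y = 0"
        using AE_lborel_singleton[of 0] by (rule eventually_mono) (use 3 in \<open>simp add: f_def dist_norm\<close>)
      have "(\<integral>\<^sup>+y\<in>ball 0 1. f ((t / norm y) *\<^sub>R y) \<partial>lborel) = 0"
        by (rule nn_integral_0_iff_AE[THEN iffD2]) (measurable, rule null)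
      then show ?thesis
        using 3 by simp
    qed
  qed
  finally show ?thesis .
qed

lemma sphere_integral_const:
  fixes c :: "'a::euclidean_space"
  shows "sphere_integral (\<lambda>_. 1) c t = real DIM('a) * t ^ (DIM('a) - 1) * measure lborel (ball (0::'a) 1)"
  using emeasure_bounded_finite[of "ball (0::'a) 1"] unfolding sphere_integral_def
  by (subst set_integral_const) auto

lemma sphere_integral_cmult: "sphere_integral (\<lambda>x. a * w x) c t = a * sphere_integral w c t"
  by (simp add: sphere_integral_def)

lemma nn_integral_powr_atLeastAtMost:
  fixes e r M :: real
  assumes "e > -1" "0 \<le> r" "0 \<le> M"
  shows "(\<integral>\<^sup>+t\<in>{0..r}. ennreal (M * t powr e) \<partial>lborel) = ennreal (M * (r powr (e + 1) / (e + 1)))"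
  using assms
  by (intro nn_integral_has_integral_lebesgue' has_integral_mult_right has_integral_powr_from_0) auto

lemma nn_integral_le_of_powr_bound:
  fixes P :: "real \<Rightarrow> real"
  assumes bound: "\<And>s. s \<in> S \<Longrightarrow> P s \<le> M * s powr e" and S: "S \<subseteq> {0..r}"
    and e: "e > -1" and r: "0 \<le> r" and M: "0 \<le> M"
  shows "(\<integral>\<^sup>+s\<in>S. ennreal (P s) \<partial>lborel) \<le> ennreal (M * (r powr (e + 1) / (e + 1)))"
proof -
  have "(\<integral>\<^sup>+s\<in>S. ennreal (P s) \<partial>lborel) \<le> (\<integral>\<^sup>+s\<in>{0..r}. ennreal (M * s powr e) \<partial>lborel)"
    using bound S by (intro nn_integral_mono) (auto intro: ennreal_leI split: split_indicator)
  also have "\<dots> = ennreal (M * (r powr (e + 1) / (e + 1)))"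
    by (rule nn_integral_powr_atLeastAtMost[OF e r M])
  finally show ?thesis .
qed

lemma set_integrable_of_powr_bound:
  fixes P :: "real \<Rightarrow> real"
  assumes meas: "set_borel_measurable lborel S P"
    and bound: "\<And>s. s \<in> S \<Longrightarrow> 0 \<le> P s \<and> P s \<le> M * s powr e" and S: "S \<subseteq> {0..r}"
    and e: "e > -1" and r: "0 \<le> r" and M: "0 \<le> M"
  shows "set_integrable lborel S P"
  unfolding set_integrable_def
proof (rule integrableI_bounded)
  show "(\<lambda>s. indicator S s *\<^sub>R P s) \<in> borel_measurable lborel"
    using meas unfolding set_borel_measurable_def .
  have "(\<integral>\<^sup>+s. ennreal (norm (indicator S s *\<^sub>R P s)) \<partial>lborel) = (\<integral>\<^sup>+s\<in>S. ennreal (P s) \<partial>lborel)"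
    using bound by (intro nn_integral_cong) (auto split: split_indicator)
  also have "\<dots> \<le> ennreal (M * (r powr (e + 1) / (e + 1)))"
    using bound by (intro nn_integral_le_of_powr_bound[OF _ S e r M]) auto
  also have "\<dots> < \<infinity>"
    by simp
  finally show "(\<integral>\<^sup>+s. ennreal (norm (indicator S s *\<^sub>R P s)) \<partial>lborel) < \<infinity>" .
qed

lemma set_integral_le_of_powr_bound:
  fixes P :: "real \<Rightarrow> real"
  assumes int: "set_integrable lborel S P"
    and bound: "\<And>s. s \<in> S \<Longrightarrow> 0 \<le> P s \<and> P s \<le> M * s powr e" and S: "S \<subseteq> {0..r}"
    and e: "e > -1" and r: "0 \<le> r" and M: "0 \<le> M"
  shows "(LINT s:S|lborel. P s) \<le> M * (r powr (e + 1) / (e + 1))"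
proof -
  have "ennreal (LINT s:S|lborel. P s) = (\<integral>\<^sup>+s\<in>S. ennreal (P s) \<partial>lborel)"
    using int bound by (intro set_nn_integral_eq_set_integral[symmetric]) auto
  also have "\<dots> \<le> ennreal (M * (r powr (e + 1) / (e + 1)))"
    using nn_integral_le_of_powr_bound[OF _ S e r M] bound by simp
  finally show ?thesis
    using e r M by (subst (asm) ennreal_le_iff) auto
qed

lemma set_integrable_ball_of_continuous_on_cball:
  fixes f :: "'a::euclidean_space \<Rightarrow> real"
  assumes "continuous_on (cball c s) f"
  shows "set_integrable lborel (ball c s) f"
proof -
  have "set_integrable lborel (cball c s) f"
    unfolding set_integrable_def by (rule borel_integrable_compact[OF compact_cball assms])
  then show ?thesis
    by (rule set_integrable_subset) auto
qed

lemma set_integral_ball_le_of_sphere_bound: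
  fixes w :: "'a::euclidean_space \<Rightarrow> real"
  assumes w: "continuous_on (cball c s) w" and nonneg: "\<And>x. x \<in> cball c s \<Longrightarrow> 0 \<le> w x"
    and bound: "\<And>t. 0 < t \<Longrightarrow> t < s \<Longrightarrow> sphere_integral w c t \<le> D * t powr e"
    and e: "e > -1" and s: "0 \<le> s" and D: "0 \<le> D"
  shows "(LINT x:ball c s|lborel. w x) \<le> D * (s powr (e + 1) / (e + 1))"
proof -
  have "ennreal (LINT x:ball c s|lborel. w x) = (\<integral>\<^sup>+x\<in>ball c s. ennreal (w x) \<partial>lborel)"
    using nonneg by (intro set_nn_integral_eq_set_integral[symmetric] set_integrable_ball_of_continuous_on_cball w) auto
  also have "\<dots> = (\<integral>\<^sup>+t\<in>{0<..<s}. ennreal (sphere_integral w c t) \<partial>lborel)"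
    by (rule nn_integral_ball_eq_sphere_integral[OF w nonneg])
  also have "\<dots> \<le> ennreal (D * (s powr (e + 1) / (e + 1)))"
    using bound by (intro nn_integral_le_of_powr_bound[OF _ _ e s D]) auto
  finally show ?thesis
    using D e s by (subst (asm) ennreal_le_iff) auto
qed

section \<open>Young's inequality on spheres\<close>

lemma abs_powr_mult_powr_le:
  fixes x A q :: real
  assumes q: "0 < q" "q < 2" and A: "A > 0"
  shows "A powr (2 - q) * \<bar>x\<bar> powr q \<le> q / 2 * x\<^sup>2 + (1 - q / 2) * A\<^sup>2"
proof (cases "x = 0")
  case True
  then show ?thesis
    using q A by simp
next
  case False
  have "(x\<^sup>2) powr (q / 2) * (A\<^sup>2) powr (1 - q / 2) \<le> q / 2 * x\<^sup>2 + (1 - q / 2) * A\<^sup>2"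
    using q A False by (intro Youngs_inequality_0) auto
  moreover have "(x\<^sup>2) powr (q / 2) = \<bar>x\<bar> powr q"
    using False powr_powr[of "\<bar>x\<bar>" 2 "q / 2"] by (simp add: powr_numeral)
  moreover have "(A\<^sup>2) powr (1 - q / 2) = A powr (2 - q)"
    using A powr_powr[of A 2 "1 - q / 2"] by (simp add: right_diff_distrib flip: powr_numeral)
  ultimately show ?thesis
    by (simp add: mult.commute)
qed

lemma sphere_integral_Young:
  fixes v :: "'a::euclidean_space \<Rightarrow> real"
  assumes v: "continuous_on (cball c t) v" and t: "0 \<le> t" and q: "0 < q" "q < 2" and A: "A > 0"
  shows "A powr (2 - q) * sphere_integral (\<lambda>x. \<bar>v x\<bar> powr q) c t
    \<le> q / 2 * Hfun v c t + (1 - q / 2) * A\<^sup>2 * sphere_integral (\<lambda>_. 1) c t"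
proof -
  define g where "g y = v (c + (t / norm y) *\<^sub>R y)" for y :: 'a
  have integrable: "set_integrable lborel (ball 0 1) (\<lambda>y. h (g y))" if "continuous_on UNIV h" for h :: "real \<Rightarrow> real"
    unfolding g_def using t
    by (intro set_integrable_sphere_pullback continuous_on_compose2[OF that v]) auto
  have "A powr (2 - q) * (LINT y:ball 0 1|lborel. \<bar>g y\<bar> powr q)
      = (LINT y:ball 0 1|lborel. A powr (2 - q) * \<bar>g y\<bar> powr q)"
    by simp
  also have "\<dots> \<le> (LINT y:ball 0 1|lborel. q / 2 * (g y)\<^sup>2 + (1 - q / 2) * A\<^sup>2 * 1)"
  proof (rule set_integral_mono)
    show "set_integrable lborel (ball 0 1) (\<lambda>y. A powr (2 - q) * \<bar>g y\<bar> powr q)"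
      using q by (intro set_integrable_mult_right integrable continuous_on_powr' continuous_intros) auto
    show "set_integrable lborel (ball 0 1) (\<lambda>y. q / 2 * (g y)\<^sup>2 + (1 - q / 2) * A\<^sup>2 * 1)"
      by (intro set_integral_add set_integrable_mult_right integrable continuous_intros)
  qed (use abs_powr_mult_powr_le[OF q A] in simp)
  also have "\<dots> = q / 2 * (LINT y:ball 0 1|lborel. (g y)\<^sup>2) + (1 - q / 2) * A\<^sup>2 * (LINT y:ball (0::'a) 1|lborel. 1)"
  proof -
    have sq: "set_integrable lborel (ball 0 1) (\<lambda>y. (g y)\<^sup>2)"
      and one: "set_integrable lborel (ball 0 1) (\<lambda>y::'a. 1::real)"
      using integrable[of "\<lambda>z. z\<^sup>2"] integrable[of "\<lambda>_. 1"] by (simp_all add: continuous_intros)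
    have "set_integrable lborel (ball 0 1) (\<lambda>y. q / 2 * (g y)\<^sup>2)"
      by (rule set_integrable_mult_right) (rule sq)
    moreover have "set_integrable lborel (ball 0 1) (\<lambda>y::'a. (1 - q / 2) * A\<^sup>2 * 1)"
      by (rule set_integrable_mult_right) (rule one)
    ultimately show ?thesis
      by (simp only: set_integral_add(2) set_integral_mult_right)
  qed
  finally have "A powr (2 - q) * (LINT y:ball 0 1|lborel. \<bar>g y\<bar> powr q)
      \<le> q / 2 * (LINT y:ball 0 1|lborel. (g y)\<^sup>2) + (1 - q / 2) * A\<^sup>2 * (LINT y:ball (0::'a) 1|lborel. 1)" .
  then have "real DIM('a) * t ^ (DIM('a) - 1) * (A powr (2 - q) * (LINT y:ball 0 1|lborel. \<bar>g y\<bar> powr q))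
      \<le> real DIM('a) * t ^ (DIM('a) - 1) * (q / 2 * (LINT y:ball 0 1|lborel. (g y)\<^sup>2) +
          (1 - q / 2) * A\<^sup>2 * (LINT y:ball (0::'a) 1|lborel. 1))"
    using t by (intro mult_left_mono) auto
  then show ?thesis
    unfolding Hfun_def sphere_integral_def g_def by (simp add: algebra_simps)
qed

text \<open>DIM('a) times the volume of the unit ball is the area of the unit sphere.\<close>

definition sphere_Young_const :: "'a::euclidean_space itself \<Rightarrow> real \<Rightarrow> real" where
  "sphere_Young_const _ q = q / 2 + (1 - q / 2) * DIM('a) * measure lborel (ball (0::'a) 1)"

lemma sphere_Young_const_pos:
  assumes "0 < q" "q < 2"
  shows "0 < sphere_Young_const TYPE('a::euclidean_space) q"
  unfolding sphere_Young_const_def using assms by (intro add_pos_nonneg) auto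

lemma sphere_integral_abs_powr_le:
  fixes v :: "'a::euclidean_space \<Rightarrow> real"
  assumes v: "continuous_on (cball c t) v" and t: "t > 0" and q: "0 < q" "q < 2" and Cbar: "Cbar > 0"
    and H: "Hfun v c t \<le> Cbar * t powr (real DIM('a) - 1 + 2 * \<sigma>)"
  shows "sphere_integral (\<lambda>x. \<bar>v x\<bar> powr q) c t
    \<le> sphere_Young_const TYPE('a) q * Cbar powr (q / 2) * t powr (real DIM('a) - 1 + \<sigma> * q)"
proof -
  \<comment> \<open>With this A the assumed bound on H reads H <= A^2 t^(N-1), matching the second Young term.\<close>
  define \<kappa> where "\<kappa> = sphere_Young_const TYPE('a) q"
  define A where "A = sqrt Cbar * t powr \<sigma>"
  have A: "A > 0"
    unfolding A_def using Cbar t by simp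
  have "real (DIM('a) - 1) = real DIM('a) - 1"
    by (simp add: of_nat_diff Suc_leI)
  then have tn: "t ^ (DIM('a) - 1) = t powr (real DIM('a) - 1)"
    using t by (metis powr_realpow)
  have "(t powr \<sigma>)\<^sup>2 = t powr (2 * \<sigma>)"
    by (simp add: power2_eq_square flip: powr_add)
  then have A2: "A\<^sup>2 = Cbar * t powr (2 * \<sigma>)"
    unfolding A_def using Cbar by (simp add: power_mult_distrib)
  have "A powr (2 - q) * sphere_integral (\<lambda>x. \<bar>v x\<bar> powr q) c t
      \<le> q / 2 * Hfun v c t + (1 - q / 2) * A\<^sup>2 * sphere_integral (\<lambda>_. 1) c t"
    using sphere_integral_Young[OF v _ q A] t by simp
  also have "\<dots> \<le> q / 2 * (Cbar * t powr (real DIM('a) - 1 + 2 * \<sigma>)) +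
      (1 - q / 2) * A\<^sup>2 * (DIM('a) * t powr (real DIM('a) - 1) * measure lborel (ball (0::'a) 1))"
    by (intro add_mono mult_left_mono) (use H q tn in \<open>simp_all add: sphere_integral_const\<close>)
  also have "\<dots> = A\<^sup>2 * t powr (real DIM('a) - 1) * \<kappa>"
    unfolding \<kappa>_def sphere_Young_const_def A2 powr_add[of t "real DIM('a) - 1"] by (simp add: algebra_simps)
  also have "A\<^sup>2 = A powr (2 - q) * A powr q"
    using A by (simp flip: powr_add powr_numeral)
  finally have "sphere_integral (\<lambda>x. \<bar>v x\<bar> powr q) c t \<le> A powr q * t powr (real DIM('a) - 1) * \<kappa>"
    using A by (simp add: mult.assoc)
  also have "A powr q = Cbar powr (q / 2) * t powr (\<sigma> * q)"
    unfolding A_def using Cbar t by (simp add: powr_mult powr_powr powr_half_sqrt[symmetric])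
  finally show ?thesis
    by (simp add: \<kappa>_def powr_add mult_ac)
qed

section \<open>The estimate for Phi\<close>

lemma Fpot_nonneg:
  assumes "0 \<le> \<mu>" "0 \<le> lp" "0 \<le> lm"
  shows "0 \<le> Fpot \<mu> lp lm q w"
  using assms unfolding Fpot_def by simp

lemma Fpot_le_abs_powr:
  assumes "0 \<le> \<mu>" "0 \<le> lp" "0 \<le> lm" "0 \<le> q"
  shows "Fpot \<mu> lp lm q w \<le> \<mu> * (lp + lm) * \<bar>w\<bar> powr q"
proof -
  have "pos_part w powr q \<le> \<bar>w\<bar> powr q" "neg_part w powr q \<le> \<bar>w\<bar> powr q"
    unfolding pos_part_def neg_part_def using assms by (auto intro: powr_mono2)
  then show ?thesis
    unfolding Fpot_def using assms by (simp add: distrib_left distrib_right add_mono mult_left_mono)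
qed

lemma continuous_on_Fpot: "0 < q \<Longrightarrow> continuous_on UNIV (Fpot \<mu> lp lm q)"
  unfolding Fpot_def pos_part_def neg_part_def
  by (intro continuous_intros continuous_on_powr') auto

lemma integral_ball_Fpot_le:
  fixes v :: "'a::euclidean_space \<Rightarrow> real"
  assumes v: "continuous_on (cball x0 s) v" and s: "0 < s" and q: "0 < q" "q < 2" and Cbar: "Cbar > 0"
    and coeffs: "0 \<le> \<mu>" "0 \<le> lp" "0 \<le> lm" and \<sigma>: "0 \<le> \<sigma>"
    and H: "\<And>t. 0 < t \<Longrightarrow> t < s \<Longrightarrow> Hfun v x0 t \<le> Cbar * t powr (real DIM('a) - 1 + 2 * \<sigma>)"
  shows "(LINT x:ball x0 s|lborel. Fpot \<mu> lp lm q (v x))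
    \<le> \<mu> * (lp + lm) * sphere_Young_const TYPE('a) q * Cbar powr (q / 2) *
      (s powr (real DIM('a) + \<sigma> * q) / (real DIM('a) + \<sigma> * q))"
proof -
  define e where "e = real DIM('a) - 1 + \<sigma> * q"
  define D where "D = \<mu> * (lp + lm) * sphere_Young_const TYPE('a) q * Cbar powr (q / 2)"
  have "0 \<le> \<sigma> * q"
    using \<sigma> q by simp
  then have e: "e > -1"
    unfolding e_def using DIM_positive[where 'a = 'a] by linarith
  have D: "D \<ge> 0"
    unfolding D_def using coeffs sphere_Young_const_pos[OF q, where 'a = 'a] by simp
  have cont_powr: "continuous_on (cball x0 s) (\<lambda>x. \<mu> * (lp + lm) * \<bar>v x\<bar> powr q)"
    using q by (intro continuous_on_compose2[OF _ v, where g = "\<lambda>z. \<mu> * (lp + lm) * \<bar>z\<bar> powr q"]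
        continuous_intros continuous_on_powr') auto
  have "(LINT x:ball x0 s|lborel. Fpot \<mu> lp lm q (v x)) \<le> (LINT x:ball x0 s|lborel. \<mu> * (lp + lm) * \<bar>v x\<bar> powr q)"
    using coeffs q
    by (intro set_integral_mono set_integrable_ball_of_continuous_on_cball cont_powr Fpot_le_abs_powr
        continuous_on_compose2[OF continuous_on_Fpot v]) auto
  also have "\<dots> \<le> D * (s powr (e + 1) / (e + 1))"
  proof (rule set_integral_ball_le_of_sphere_bound[OF cont_powr _ _ e _ D])
    fix t :: real
    assume t: "0 < t" "t < s"
    then have "sphere_integral (\<lambda>x. \<bar>v x\<bar> powr q) x0 t \<le> sphere_Young_const TYPE('a) q * Cbar powr (q / 2) * t powr e"
      unfolding e_def using q Cbar H by (intro sphere_integral_abs_powr_le continuous_on_subset[OF v]) auto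
    then show "sphere_integral (\<lambda>x. \<mu> * (lp + lm) * \<bar>v x\<bar> powr q) x0 t \<le> D * t powr e"
      using coeffs unfolding D_def sphere_integral_cmult by (simp add: mult_left_mono mult.assoc)
  qed (use coeffs s in auto)
  also have "e + 1 = real DIM('a) + \<sigma> * q"
    by (simp add: e_def)
  finally show ?thesis
    by (simp add: D_def)
qed

lemma Phi_measurable:
  fixes v :: "'a::euclidean_space \<Rightarrow> real"
  assumes v: "continuous_on (ball x0 1) v"
  shows "set_borel_measurable lborel {0<..<1} (Phi \<mu> lp lm q \<gamma> v x0)"
proof -
  define v' where "v' x = indicator (ball x0 1) x *\<^sub>R v x" for x
  have [measurable]: "v' \<in> borel_measurable borel"
    unfolding v'_def by (rule borel_measurable_continuous_on_indicator) (use v in auto)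
  have [measurable]: "Measurable.pred (borel \<Otimes>\<^sub>M borel) (\<lambda>p::real \<times> 'a. snd p \<in> ball x0 (fst p))"
    unfolding mem_ball by measurable
  define \<Psi> where "\<Psi> s = (2 * real DIM('a) - (real DIM('a) - 2) * q) / (q * s powr (real DIM('a) - 1 + 2 * \<gamma>)) *
       (\<integral>x. indicator (ball x0 s) x *\<^sub>R Fpot \<mu> lp lm q (v' x) \<partial>lborel)" for s
  have "(\<lambda>(s, x). indicator (ball x0 s) x *\<^sub>R Fpot \<mu> lp lm q (v' x)) \<in> borel_measurable (lborel \<Otimes>\<^sub>M lborel)"
    unfolding Fpot_def pos_part_def neg_part_def by measurable
  then have "(\<lambda>s. \<integral>x. indicator (ball x0 s) x *\<^sub>R Fpot \<mu> lp lm q (v' x) \<partial>lborel) \<in> borel_measurable lborel"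
    by (rule lborel.borel_measurable_lebesgue_integral)
  then have \<Psi>: "(\<lambda>s. indicator {0<..<1} s *\<^sub>R \<Psi> s) \<in> borel_measurable lborel"
    unfolding \<Psi>_def by measurable
  have eq: "indicator {0<..<1} s *\<^sub>R Phi \<mu> lp lm q \<gamma> v x0 s = indicator {0<..<1} s *\<^sub>R \<Psi> s" for s
  proof (cases "0 < s \<and> s < 1")
    case True
    then have "(LINT x:ball x0 s|lborel. Fpot \<mu> lp lm q (v x))
        = (\<integral>x. indicator (ball x0 s) x *\<^sub>R Fpot \<mu> lp lm q (v' x) \<partial>lborel)"
      unfolding set_lebesgue_integral_def
      by (intro Bochner_Integration.integral_cong) (auto simp: v'_def split: split_indicator)
    then show ?thesis
      unfolding Phi_def \<Psi>_def by simp
  qed simp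
  show ?thesis
    unfolding set_borel_measurable_def eq by (rule \<Psi>)
qed

lemma Phi_coeff_pos:
  fixes q :: real
  assumes "0 < q" "q < 2"
  shows "0 < (2 * real n - (real n - 2) * q) / q"
proof -
  have "0 < real n * (2 - q) + 2 * q"
    using assms by (simp add: add_nonneg_pos)
  then show ?thesis
    using assms by (simp add: algebra_simps)
qed

definition Phi_bound_const :: "'a::euclidean_space itself \<Rightarrow> real \<Rightarrow> real \<Rightarrow> real \<Rightarrow> real" where
  "Phi_bound_const _ q lp lm =
     (2 * real DIM('a) - (real DIM('a) - 2) * q) / q * (lp + lm) * sphere_Young_const TYPE('a) q"

lemma Phi_bound_const_nonneg:
  assumes "0 < q" "q < 2" "0 \<le> lp" "0 \<le> lm"
  shows "0 \<le> Phi_bound_const TYPE('a::euclidean_space) q lp lm"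
  unfolding Phi_bound_const_def
  using assms Phi_coeff_pos[OF assms(1,2), of "DIM('a)"] sphere_Young_const_pos[OF assms(1,2), where 'a = 'a]
  by (intro mult_nonneg_nonneg) auto

lemma Phi_le_powr:
  fixes v :: "'a::euclidean_space \<Rightarrow> real"
  assumes v: "continuous_on (ball x0 1) v" and q: "0 < q" "q < 2"
    and Cbar: "Cbar > 0" and coeffs: "0 \<le> \<mu>" "0 \<le> lp" "0 \<le> lm" and \<sigma>: "0 \<le> \<sigma>"
    and H: "\<forall>r\<in>{0<..<1}. Hfun v x0 r \<le> Cbar * r powr (real DIM('a) - 1 + 2 * \<sigma>)"
    and s: "s \<in> {0<..<1}"
  shows "0 \<le> Phi \<mu> lp lm q \<gamma> v x0 s \<and>
    Phi \<mu> lp lm q \<gamma> v x0 s \<le> Phi_bound_const TYPE('a) q lp lm * \<mu> * Cbar powr (q / 2) *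
      s powr (1 + \<sigma> * q - 2 * \<gamma>)"
proof -
  define c where "c = (2 * real DIM('a) - (real DIM('a) - 2) * q) / q"
  define D where "D = \<mu> * (lp + lm) * sphere_Young_const TYPE('a) q * Cbar powr (q / 2)"
  define b where "b = real DIM('a) + \<sigma> * q"
  define I where "I = (LINT x:ball x0 s|lborel. Fpot \<mu> lp lm q (v x))"
  have c: "c > 0"
    unfolding c_def using q by (rule Phi_coeff_pos)
  have D: "D \<ge> 0"
    unfolding D_def using coeffs sphere_Young_const_pos[OF q, where 'a = 'a] by simp
  have b: "b \<ge> 1"
    unfolding b_def using DIM_positive[where 'a = 'a] \<sigma> q by (simp add: add_increasing2 Suc_le_eq)
  have Phi_eq: "Phi \<mu> lp lm q \<gamma> v x0 s = c / s powr (real DIM('a) - 1 + 2 * \<gamma>) * I"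
    unfolding Phi_def c_def I_def by simp
  have "0 \<le> I"
    unfolding I_def set_lebesgue_integral_def using coeffs
    by (intro Bochner_Integration.integral_nonneg) (simp add: Fpot_nonneg)
  then have "0 \<le> Phi \<mu> lp lm q \<gamma> v x0 s"
    unfolding Phi_eq using c by simp
  have "I \<le> D * (s powr b / b)"
    unfolding I_def D_def b_def using s q Cbar coeffs \<sigma> H
    by (intro integral_ball_Fpot_le continuous_on_subset[OF v]) auto
  also have "\<dots> \<le> D * s powr b"
    using D b divide_left_mono[of 1 b "s powr b"] by (intro mult_left_mono) auto
  finally have "Phi \<mu> lp lm q \<gamma> v x0 s \<le> c / s powr (real DIM('a) - 1 + 2 * \<gamma>) * (D * s powr b)"
    unfolding Phi_eq using c by (intro mult_left_mono) auto
  also have "\<dots> = c * D * s powr (1 + \<sigma> * q - 2 * \<gamma>)"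
    using s by (simp add: b_def field_simps flip: powr_add)
  finally show ?thesis
    using \<open>0 \<le> Phi \<mu> lp lm q \<gamma> v x0 s\<close> by (simp add: Phi_bound_const_def c_def D_def mult_ac)
qed

lemma set_integrable_Phi:
  fixes v :: "'a::euclidean_space \<Rightarrow> real"
  assumes v: "continuous_on (ball x0 1) v" and q: "0 < q" "q < 2"
    and Cbar: "Cbar > 0" and coeffs: "0 \<le> \<mu>" "0 \<le> lp" "0 \<le> lm" and \<sigma>: "0 \<le> \<sigma>"
    and H: "\<forall>r\<in>{0<..<1}. Hfun v x0 r \<le> Cbar * r powr (real DIM('a) - 1 + 2 * \<sigma>)"
    and \<gamma>: "\<gamma> < (2 + \<sigma> * q) / 2"
  shows "set_integrable lborel {0<..<1} (Phi \<mu> lp lm q \<gamma> v x0)"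
  using \<gamma> Phi_bound_const_nonneg[OF q coeffs(2,3), where 'a = 'a] coeffs Cbar
  by (intro set_integrable_of_powr_bound[where r = 1, OF Phi_measurable[OF v] Phi_le_powr[OF v q Cbar coeffs \<sigma> H]])
    auto

lemma set_integral_Phi_le:
  fixes v :: "'a::euclidean_space \<Rightarrow> real"
  assumes v: "continuous_on (ball x0 1) v" and q: "0 < q" "q < 2"
    and Cbar: "Cbar > 0" and coeffs: "0 \<le> \<mu>" "0 \<le> lp" "0 \<le> lm" and \<sigma>: "0 \<le> \<sigma>"
    and H: "\<forall>r\<in>{0<..<1}. Hfun v x0 r \<le> Cbar * r powr (real DIM('a) - 1 + 2 * \<sigma>)"
    and \<gamma>: "\<gamma> < (2 + \<sigma> * q) / 2" and r: "r \<in> {0<..<1}"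
  shows "(LINT s:{0<..r}|lborel. Phi \<mu> lp lm q \<gamma> v x0 s)
    \<le> Phi_bound_const TYPE('a) q lp lm * \<mu> * Cbar powr (q / 2) / (2 + \<sigma> * q - 2 * \<gamma>) *
      r powr (2 + \<sigma> * q - 2 * \<gamma>)"
proof -
  define M where "M = Phi_bound_const TYPE('a) q lp lm * \<mu> * Cbar powr (q / 2)"
  define e where "e = 1 + \<sigma> * q - 2 * \<gamma>"
  have "set_integrable lborel {0<..r} (Phi \<mu> lp lm q \<gamma> v x0)"
    by (rule set_integrable_subset[OF set_integrable_Phi[OF v q Cbar coeffs \<sigma> H \<gamma>]]) (use r in auto)
  then have "(LINT s:{0<..r}|lborel. Phi \<mu> lp lm q \<gamma> v x0 s) \<le> M * (r powr (e + 1) / (e + 1))"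
    using r \<gamma> Phi_le_powr[OF v q Cbar coeffs \<sigma> H] Phi_bound_const_nonneg[OF q coeffs(2,3), where 'a = 'a]
      coeffs Cbar
    unfolding M_def e_def by (intro set_integral_le_of_powr_bound) auto
  moreover have "e + 1 = 2 + \<sigma> * q - 2 * \<gamma>"
    by (simp add: e_def)
  ultimately show ?thesis
    by (simp add: M_def)
qed

theorem lemma5p2:
  fixes q lp lm :: real
  assumes dim: "DIM('a::euclidean_space) \<ge> 2"
    and q: "1 \<le> q" "q < 2"
    and lam: "lp > 0" "lm > 0"
  shows "\<exists>C>0. \<forall>\<mu>>0. \<forall>(x0::'a) v. \<forall>\<sigma> Cbar.
     weak_solution (ball x0 1) (rhs \<mu> lp lm q) v \<and> continuous_on (ball x0 1) v \<and>
     1 \<le> \<sigma> \<and> \<sigma> < 2 / (2 - q) \<and> Cbar > 0 \<and>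
     (\<forall>r\<in>{0<..<1}. Hfun v x0 r \<le> Cbar * r powr (real DIM('a) - 1 + 2 * \<sigma>))
     \<longrightarrow>
     (\<forall>\<gamma>. \<sigma> \<le> \<gamma> \<and> \<gamma> < (2 + \<sigma> * q) / 2 \<longrightarrow>
        set_integrable lborel {0<..<1} (Phi \<mu> lp lm q \<gamma> v x0) \<and>
        (\<forall>r\<in>{0<..<1}.
           (LINT s:{0<..r}|lborel. Phi \<mu> lp lm q \<gamma> v x0 s)
             \<le> C * \<mu> * Cbar powr (q / 2) / (2 + \<sigma> * q - 2 * \<gamma>) * r powr (2 + \<sigma> * q - 2 * \<gamma>)))"
proof -
  have q': "0 < q" "q < 2"
    using q by auto
  have "0 < Phi_bound_const TYPE('a) q lp lm"
    unfolding Phi_bound_const_def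
    using lam Phi_coeff_pos[OF q', of "DIM('a)"] sphere_Young_const_pos[OF q', where 'a = 'a]
    by (intro mult_pos_pos) auto
  moreover have "set_integrable lborel {0<..<1} (Phi \<mu> lp lm q \<gamma> v x0) \<and>
      (\<forall>r\<in>{0<..<1}. (LINT s:{0<..r}|lborel. Phi \<mu> lp lm q \<gamma> v x0 s)
        \<le> Phi_bound_const TYPE('a) q lp lm * \<mu> * Cbar powr (q / 2) / (2 + \<sigma> * q - 2 * \<gamma>) *
          r powr (2 + \<sigma> * q - 2 * \<gamma>))"
    if \<mu>: "0 < \<mu>" and v: "continuous_on (ball x0 1) v" and \<sigma>: "1 \<le> \<sigma>" and Cbar: "0 < Cbar"
      and H: "\<forall>r\<in>{0<..<1}. Hfun v x0 r \<le> Cbar * r powr (real DIM('a) - 1 + 2 * \<sigma>)"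
      and \<gamma>: "\<gamma> < (2 + \<sigma> * q) / 2"
    for \<mu> and x0 :: 'a and v \<sigma> Cbar \<gamma>
  proof -
    have coeffs: "0 \<le> \<mu>" "0 \<le> lp" "0 \<le> lm" and \<sigma>': "0 \<le> \<sigma>"
      using \<mu> lam \<sigma> by auto
    show ?thesis
      using set_integrable_Phi[OF v q' Cbar coeffs \<sigma>' H \<gamma>] set_integral_Phi_le[OF v q' Cbar coeffs \<sigma>' H \<gamma>]
      by blast
  qed
  ultimately show ?thesis
    by blast
qed

end
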